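(* Let $f:\mathbb{R}^m\to\mathbb{R}\cup\{+\infty\}$ be a proper lower semicontinuous convex function and let $\bar x\in S_f$ be such that $\min_{\|h\|=1}f'(\bar x,h)\neq 0$. Then the inequality $f(x)\le 0$ has a local error bound at $\bar x$, and moreover $$\tau_{\min}(f,\bar x)\le \frac{1}{\left|\min_{\|h\|=1}f'(\bar x,h)\right|}.$$
   Context: $\mathbb{R}^m$ carries the Euclidean norm, $B(\bar x,\delta)$ is the closed ball of radius $\delta$ around $\bar x$, and $d(x,D)=\inf\{\|x-y\|:y\in D\}$ (with $\inf\emptyset=+\infty$). $f'(\bar x,h):=\lim_{t\to0^+}\frac{f(\bar x+th)-f(\bar x)}{t}$ is the directional derivative. $S_f:=\{x\in\mathbb{R}^m: f(x)\le 0\}$. The inequality $f(x)\le0$ has a local error bound at $\bar x$ if there exist $\tau,\delta\in(0,+\infty)$ with $d(x,S_f)\le\tau[f(x)]_+$ for all $x\in B(\bar x,\delta)$, where $[t]_+=\max\{t,0\}$. The local error bound modulus is $\tau_{\min}(f,\bar x):=\inf\{\tau>0:\text{there exists }\delta>0\text{ such that }d(x,S_f)\le\tau[f(x)]_+\ \forall x\in B(\bar x,\delta)\}$. *)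

theory Defs
  imports "HOL-Analysis.Analysis"
begin

text \<open>Extended-real valued functions f : R^m -> R \<union> {+\<infinity>} are modelled as
  maps into ereal that never take the value -\<infinity>.\<close>

definition proper_fun :: "('a \<Rightarrow> ereal) \<Rightarrow> bool" where
  "proper_fun f \<longleftrightarrow> (\<forall>x. f x \<noteq> -\<infinity>) \<and> (\<exists>x. f x \<noteq> \<infinity>)"

definition lsc_fun :: "('a::topological_space \<Rightarrow> ereal) \<Rightarrow> bool" where
  "lsc_fun f \<longleftrightarrow> (\<forall>x. f x \<le> Liminf (at x) f)"

definition convex_fun :: "('a::real_vector \<Rightarrow> ereal) \<Rightarrow> bool" where
  "convex_fun f \<longleftrightarrow>
     (\<forall>x y t. 0 \<le> t \<and> t \<le> 1 \<longrightarrow>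
        f ((1 - t) *\<^sub>R x + t *\<^sub>R y) \<le> ereal (1 - t) * f x + ereal t * f y)"

definition dir_deriv :: "('a::real_normed_vector \<Rightarrow> ereal) \<Rightarrow> 'a \<Rightarrow> 'a \<Rightarrow> ereal" where
  "dir_deriv f xb h = Lim (at_right (0::real)) (\<lambda>t. (f (xb + t *\<^sub>R h) - f xb) / ereal t)"

definition sublevel0 :: "('a \<Rightarrow> ereal) \<Rightarrow> 'a set" where
  "sublevel0 f = {x. f x \<le> 0}"

text \<open>Distance to a set, with inf of the empty set = +\<infinity>.\<close>
definition edist_set :: "'a::metric_space \<Rightarrow> 'a set \<Rightarrow> ereal" where
  "edist_set x D = (INF y\<in>D. ereal (dist x y))"

definition local_error_bound :: "('a::metric_space \<Rightarrow> ereal) \<Rightarrow> 'a \<Rightarrow> bool" where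
  "local_error_bound f xb \<longleftrightarrow>
     (\<exists>\<tau> \<delta>. 0 < \<tau> \<and> 0 < \<delta> \<and>
        (\<forall>x\<in>cball xb \<delta>. edist_set x (sublevel0 f) \<le> ereal \<tau> * max (f x) 0))"

definition tau_min :: "('a::metric_space \<Rightarrow> ereal) \<Rightarrow> 'a \<Rightarrow> ereal" where
  "tau_min f xb = Inf {ereal \<tau> | \<tau>. 0 < \<tau> \<and> (\<exists>\<delta>>0.
        \<forall>x\<in>cball xb \<delta>. edist_set x (sublevel0 f) \<le> ereal \<tau> * max (f x) 0)}"

end

theory Submission
  imports Defs
begin

text \<open>Let \<open>\<mu>\<close> be the minimal slope of \<open>f\<close> at \<open>xb\<close> over unit directions. Convexity makes the
  difference quotients along each ray monotone, so \<open>f'(xb,h)\<close> is their infimum. If \<open>\<mu> > 0\<close>, then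
  \<open>f\<close> grows at least like \<open>\<mu> \<parallel>x - xb\<parallel>\<close>, and on the segment from \<open>x\<close> to \<open>xb\<close> convexity locates a
  point of \<open>S_f\<close> within \<open>f(x)/\<mu>\<close> of \<open>x\<close>. If \<open>\<mu> < 0\<close>, then for any \<open>m \<in> (\<mu>, 0)\<close> a step of
  length \<open>t\<close> from \<open>xb\<close> in the optimal direction reaches a point \<open>z\<close> with \<open>f(z) < m t < 0\<close>; the
  segment from any \<open>x\<close> near \<open>xb\<close> to \<open>z\<close> contains a point of \<open>S_f\<close> within roughly \<open>f(x)/|m|\<close>
  of \<open>x\<close>.\<close>

abbreviation error_bound_on :: "('a::metric_space \<Rightarrow> ereal) \<Rightarrow> real \<Rightarrow> 'a set \<Rightarrow> bool" where
  "error_bound_on f \<tau> S \<equiv> \<forall>x\<in>S. edist_set x (sublevel0 f) \<le> ereal \<tau> * max (f x) 0"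

lemma proper_fun_realE:
  assumes "proper_fun f" "f x \<noteq> \<infinity>"
  obtains a where "f x = ereal a"
  using assms unfolding proper_fun_def by (cases "f x") auto

lemma convex_funD_real:
  assumes "convex_fun f" "f x = ereal a" "f y = ereal b" "0 \<le> l" "l \<le> 1"
  shows "f ((1 - l) *\<^sub>R x + l *\<^sub>R y) \<le> ereal ((1 - l) * a + l * b)"
  using assms unfolding convex_fun_def by (metis times_ereal.simps(1) plus_ereal.simps(1))

lemma convex_fun_diff_quotient_mono:
  fixes f :: "'a::real_normed_vector \<Rightarrow> ereal"
  assumes cv: "convex_fun f" and pr: "proper_fun f" and c: "f xb = ereal c"
    and st: "0 < s" "s \<le> t"
  shows "(f (xb + s *\<^sub>R h) - f xb) / ereal s \<le> (f (xb + t *\<^sub>R h) - f xb) / ereal t"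
proof (cases "f (xb + t *\<^sub>R h) = \<infinity>")
  case True
  then show ?thesis using c st by (simp add: divide_ereal_def)
next
  case False
  then obtain b where b: "f (xb + t *\<^sub>R h) = ereal b" using pr by (blast elim: proper_fun_realE)
  have "xb + s *\<^sub>R h = (1 - s/t) *\<^sub>R xb + (s/t) *\<^sub>R (xb + t *\<^sub>R h)"
    using st by (simp add: algebra_simps)
  then have le: "f (xb + s *\<^sub>R h) \<le> ereal ((1 - s/t) * c + (s/t) * b)"
    using convex_funD_real[OF cv c b, of "s/t"] st by simp
  then have "f (xb + s *\<^sub>R h) \<noteq> \<infinity>" by auto
  then obtain a where a: "f (xb + s *\<^sub>R h) = ereal a" using pr by (blast elim: proper_fun_realE)
  have "a \<le> (1 - s/t) * c + (s/t) * b" using le unfolding a by simp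
  then have "a - c \<le> (s/t) * (b - c)" by (simp add: left_diff_distrib right_diff_distrib)
  then have "(a - c) / s \<le> (b - c) / t" using st by (simp add: field_simps)
  then show ?thesis unfolding a b c using st by simp
qed

lemma dir_deriv_eq_INF_diff_quotient:
  fixes f :: "'a::real_normed_vector \<Rightarrow> ereal"
  assumes cv: "convex_fun f" and pr: "proper_fun f" and c: "f xb = ereal c"
  shows "dir_deriv f xb h = (INF t\<in>{0<..}. (f (xb + t *\<^sub>R h) - f xb) / ereal t)"
proof -
  define Q where "Q = (\<lambda>t::real. (f (xb + t *\<^sub>R h) - f xb) / ereal t)"
  define L where "L = (INF t\<in>{0<..}. Q t)"
  have "(Q \<longlongrightarrow> L) (at_right 0)"
  proof (rule order_tendstoI)
    fix a assume "a < L"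
    then have "\<forall>t>0. a < Q t" unfolding L_def by (meson INF_lower greaterThan_iff less_le_trans)
    then show "eventually (\<lambda>t. a < Q t) (at_right 0)"
      unfolding eventually_at_right_field by (intro exI[of _ 1]) auto
  next
    fix a assume "L < a"
    then obtain s where s: "s > 0" "Q s < a" unfolding L_def INF_less_iff by auto
    have "\<forall>t>0. t < s \<longrightarrow> Q t < a"
      using convex_fun_diff_quotient_mono[OF cv pr c] s unfolding Q_def
      by (meson less_imp_le le_less_trans)
    then show "eventually (\<lambda>t. Q t < a) (at_right 0)"
      unfolding eventually_at_right_field using s by blast
  qed
  then have "Lim (at_right 0) Q = L" by (intro tendsto_Lim) auto
  then show ?thesis unfolding dir_deriv_def Q_def L_def by simp
qed

lemma edist_sublevel0_le_segment:
  fixes f :: "'a::real_normed_vector \<Rightarrow> ereal"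
  assumes cv: "convex_fun f" and x: "f x = ereal b" "0 < b" and z: "f z = ereal a" "a \<le> 0"
  shows "edist_set x (sublevel0 f) \<le> ereal (b * dist x z / (b - a))"
proof -
  define l where "l = b / (b - a)"
  have l: "0 \<le> l" "l \<le> 1" using x z by (auto simp: l_def field_simps)
  define y where "y = (1 - l) *\<^sub>R x + l *\<^sub>R z"
  have "f y \<le> ereal ((1 - l) * b + l * a)" unfolding y_def by (rule convex_funD_real[OF cv x(1) z(1) l])
  moreover have "(1 - l) * b + l * a = 0" using x z by (simp add: l_def field_simps)
  ultimately have "y \<in> sublevel0 f" by (simp add: sublevel0_def zero_ereal_def)
  then have "edist_set x (sublevel0 f) \<le> ereal (dist x y)"
    unfolding edist_set_def by (rule INF_lower)
  moreover have "x - y = l *\<^sub>R (x - z)" by (simp add: y_def algebra_simps)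
  then have "dist x y = b * dist x z / (b - a)" using x z by (simp add: dist_norm l_def)
  ultimately show ?thesis by simp
qed

lemma error_bound_atI:
  fixes f :: "'a::metric_space \<Rightarrow> ereal"
  assumes "0 < \<tau>" and "proper_fun f"
    and pos: "\<And>b. f x = ereal b \<Longrightarrow> 0 < b \<Longrightarrow> edist_set x (sublevel0 f) \<le> ereal (\<tau> * b)"
  shows "edist_set x (sublevel0 f) \<le> ereal \<tau> * max (f x) 0"
proof (cases "f x")
  case (real b)
  show ?thesis
  proof (cases "0 < b")
    case False
    then have "x \<in> sublevel0 f" using real by (simp add: sublevel0_def)
    then have "edist_set x (sublevel0 f) \<le> ereal (dist x x)"
      unfolding edist_set_def by (rule INF_lower)
    then show ?thesis using False real by (simp add: max_def zero_ereal_def)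
  qed (use pos real in \<open>simp add: max_def\<close>)
next
  case PInf
  then show ?thesis using \<open>0 < \<tau>\<close> by simp
next
  case MInf
  then show ?thesis using \<open>proper_fun f\<close> by (simp add: proper_fun_def)
qed

lemma error_bound_of_dir_deriv_ge:
  fixes f :: "'a::real_normed_vector \<Rightarrow> ereal"
  assumes cv: "convex_fun f" and pr: "proper_fun f" and "f xb \<le> 0" and r: "0 < r"
    and slope: "\<And>h. norm h = 1 \<Longrightarrow> ereal r \<le> dir_deriv f xb h"
  shows "error_bound_on f (1 / r) UNIV"
proof
  have "f xb \<noteq> \<infinity>" using \<open>f xb \<le> 0\<close> by auto
  then obtain c where c: "f xb = ereal c" using pr by (blast elim: proper_fun_realE)
  have "c \<le> 0" using \<open>f xb \<le> 0\<close> c by (simp add: zero_ereal_def)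
  fix x
  show "edist_set x (sublevel0 f) \<le> ereal (1 / r) * max (f x) 0"
  proof (rule error_bound_atI)
    fix b assume b: "f x = ereal b" "0 < b"
    define t where "t = norm (x - xb)"
    have "x \<noteq> xb" using b c \<open>c \<le> 0\<close> by auto
    then have t: "0 < t" by (simp add: t_def)
    define h where "h = (1 / t) *\<^sub>R (x - xb)"
    have h: "norm h = 1" "xb + t *\<^sub>R h = x" using t by (simp_all add: h_def t_def)
    have "ereal r \<le> (f (xb + t *\<^sub>R h) - f xb) / ereal t"
      using slope[OF h(1)] t unfolding dir_deriv_eq_INF_diff_quotient[OF cv pr c]
      by (meson INF_lower greaterThan_iff order_trans)
    then have "ereal r \<le> ereal ((b - c) / t)" using h(2) t b c by simp
    then have "r * t \<le> b - c" using t by (simp add: field_simps)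
    then have "b * (r * t) \<le> b * (b - c)" using b by (simp add: mult_left_mono)
    then have "b * t / (b - c) \<le> b / r" using b \<open>c \<le> 0\<close> r by (simp add: field_simps)
    have "edist_set x (sublevel0 f) \<le> ereal (b * t / (b - c))"
      using edist_sublevel0_le_segment[OF cv b c \<open>c \<le> 0\<close>] by (simp add: t_def dist_norm)
    also have "\<dots> \<le> ereal (1 / r * b)" using \<open>b * t / (b - c) \<le> b / r\<close> by simp
    finally show "edist_set x (sublevel0 f) \<le> ereal (1 / r * b)" .
  qed (use r pr in auto)
qed

lemma error_bound_near_point_below:
  fixes f :: "'a::real_normed_vector \<Rightarrow> ereal"
  assumes cv: "convex_fun f" and pr: "proper_fun f" and z: "f z \<le> ereal (- s)" "0 < s"
    and \<tau>: "0 < \<tau>" "dist xb z + \<delta> \<le> \<tau> * s"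
  shows "error_bound_on f \<tau> (cball xb \<delta>)"
proof
  have "f z \<noteq> \<infinity>" using z by auto
  then obtain a where a: "f z = ereal a" using pr by (blast elim: proper_fun_realE)
  have "a \<le> - s" "a \<le> 0" using z a by simp_all
  fix x assume "x \<in> cball xb \<delta>"
  then have "dist x z \<le> \<tau> * s" using \<tau> dist_triangle[of x z xb] by (simp add: dist_commute)
  show "edist_set x (sublevel0 f) \<le> ereal \<tau> * max (f x) 0"
  proof (rule error_bound_atI)
    fix b assume b: "f x = ereal b" "0 < b"
    have "b * dist x z / (b - a) \<le> b * (\<tau> * s) / s"
    proof (rule frac_le)
      show "b * dist x z \<le> b * (\<tau> * s)" using b \<open>dist x z \<le> \<tau> * s\<close> by (simp add: mult_left_mono)
    qed (use b \<open>a \<le> - s\<close> z \<tau> in auto)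
    then have "b * dist x z / (b - a) \<le> \<tau> * b" using z by (simp add: mult.commute)
    have "edist_set x (sublevel0 f) \<le> ereal (b * dist x z / (b - a))"
      by (rule edist_sublevel0_le_segment[OF cv b a \<open>a \<le> 0\<close>])
    also have "\<dots> \<le> ereal (\<tau> * b)" using \<open>b * dist x z / (b - a) \<le> \<tau> * b\<close> by simp
    finally show "edist_set x (sublevel0 f) \<le> ereal (\<tau> * b)" .
  qed (use \<tau> pr in auto)
qed

lemma diff_quotient_lessD:
  assumes "f x = ereal c" "0 < t" "(f y - f x) / ereal t < ereal m"
  shows "f y < ereal (c + m * t)"
  using assms by (cases "f y") (auto simp: field_simps)

lemma error_bound_of_dir_deriv_less:
  fixes f :: "'a::real_normed_vector \<Rightarrow> ereal"
  assumes cv: "convex_fun f" and pr: "proper_fun f" and "f xb \<le> 0"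
    and h: "norm h = 1" "dir_deriv f xb h < ereal m" and \<tau>: "0 < \<tau>" "1 < \<tau> * - m"
  shows "\<exists>\<delta>>0. error_bound_on f \<tau> (cball xb \<delta>)"
proof -
  have "f xb \<noteq> \<infinity>" using \<open>f xb \<le> 0\<close> by auto
  then obtain c where c: "f xb = ereal c" using pr by (blast elim: proper_fun_realE)
  have "c \<le> 0" using \<open>f xb \<le> 0\<close> c by (simp add: zero_ereal_def)
  obtain t where t: "0 < t" "(f (xb + t *\<^sub>R h) - f xb) / ereal t < ereal m"
    using h(2) unfolding dir_deriv_eq_INF_diff_quotient[OF cv pr c] INF_less_iff by auto
  define z where "z = xb + t *\<^sub>R h"
  have "f z < ereal (c + m * t)"
    using diff_quotient_lessD[where f = f, OF c t] unfolding z_def .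
  also have "\<dots> \<le> ereal (- (- m * t))" using \<open>c \<le> 0\<close> by simp
  finally have fz: "f z \<le> ereal (- (- m * t))" by simp
  have "\<tau> * m < 0" using \<tau>(2) by simp
  then have "0 < - m * t" using \<tau>(1) t by (simp add: mult_less_0_iff)
  define \<delta> where "\<delta> = t * (\<tau> * - m - 1)"
  have "dist xb z + \<delta> \<le> \<tau> * (- m * t)"
    using h(1) t by (simp add: z_def \<delta>_def dist_norm algebra_simps)
  moreover have "0 < \<delta>" using \<tau> t by (simp add: \<delta>_def)
  ultimately show ?thesis
    using error_bound_near_point_below[OF cv pr fz \<open>0 < - m * t\<close> \<tau>(1)] by blast
qed

lemma ereal_inverse_abs_less:
  fixes \<mu> :: ereal
  assumes "0 < \<tau>" "1 / \<bar>\<mu>\<bar> < ereal \<tau>"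
  shows "ereal (1 / \<tau>) < \<bar>\<mu>\<bar>"
proof (cases \<mu>)
  case (real r)
  with assms have "r \<noteq> 0" by (auto simp: one_ereal_def)
  with assms real have "1 / \<bar>r\<bar> < \<tau>" by (simp add: one_ereal_def)
  with \<open>r \<noteq> 0\<close> \<open>0 < \<tau>\<close> have "1 / \<tau> < \<bar>r\<bar>" by (simp add: divide_less_eq mult.commute)
  with real show ?thesis by simp
qed auto

lemma local_error_bound_tau_min_leI:
  fixes f :: "'a::metric_space \<Rightarrow> ereal" and K :: ereal
  assumes "0 \<le> K" "K \<noteq> \<infinity>"
    and bound: "\<And>\<tau>. 0 < \<tau> \<Longrightarrow> K < ereal \<tau> \<Longrightarrow> \<exists>\<delta>>0. error_bound_on f \<tau> (cball xb \<delta>)"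
  shows "local_error_bound f xb \<and> tau_min f xb \<le> K"
proof
  obtain k where k: "K = ereal k" "0 \<le> k" using assms by (cases K) auto
  obtain \<delta> where "0 < \<delta>" "error_bound_on f (k + 1) (cball xb \<delta>)" using bound[of "k + 1"] k by auto
  then show "local_error_bound f xb"
    unfolding local_error_bound_def using k by (intro exI[of _ "k + 1"] exI[of _ \<delta>]) auto
  show "tau_min f xb \<le> K"
  proof (rule ereal_le_epsilon2)
    fix e :: real assume "0 < e"
    then have "tau_min f xb \<le> ereal (k + e)"
      unfolding tau_min_def using bound[of "k + e"] k by (intro Inf_lower) force
    then show "tau_min f xb \<le> K + ereal e" using k by simp
  qed
qed

lemma error_bound_of_min_dir_deriv:
  fixes f :: "'a::real_normed_vector \<Rightarrow> ereal"
  assumes cv: "convex_fun f" and pr: "proper_fun f" and fxb: "f xb \<le> 0"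
    and min: "\<And>h. norm h = 1 \<Longrightarrow> \<mu> \<le> dir_deriv f xb h"
    and h0: "norm h0 = 1" "dir_deriv f xb h0 = \<mu>"
    and "\<mu> \<noteq> 0" and \<tau>: "0 < \<tau>" "1 / \<bar>\<mu>\<bar> < ereal \<tau>"
  shows "\<exists>\<delta>>0. error_bound_on f \<tau> (cball xb \<delta>)"
proof (cases "0 < \<mu>")
  case True
  then have "ereal (1 / \<tau>) \<le> dir_deriv f xb h" if "norm h = 1" for h
    using ereal_inverse_abs_less[OF \<tau>] min[OF that] by auto
  then have "error_bound_on f \<tau> UNIV" using error_bound_of_dir_deriv_ge[OF cv pr fxb, of "1 / \<tau>"] \<tau> by simp
  then show ?thesis by (intro exI[of _ 1]) auto
next
  case False
  then have "\<mu> < ereal (- (1 / \<tau>))"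
    using ereal_inverse_abs_less[OF \<tau>] \<open>\<mu> \<noteq> 0\<close> by (cases \<mu>) auto
  then obtain m where "\<mu> < ereal m" "m < - (1 / \<tau>)" using ereal_dense2 by force
  then have "1 < \<tau> * - m" using \<tau>(1) by (simp add: field_simps)
  then show ?thesis using error_bound_of_dir_deriv_less[OF cv pr fxb h0(1)] h0(2) \<open>\<mu> < ereal m\<close> \<tau>(1) by auto
qed

theorem proposition3:
  fixes f :: "'a::euclidean_space \<Rightarrow> ereal" and xb :: 'a
  assumes "proper_fun f" and "lsc_fun f" and "convex_fun f"
    and "xb \<in> sublevel0 f"
    and "\<exists>h0. norm h0 = 1 \<and>
           dir_deriv f xb h0 = (INF h\<in>sphere 0 1. dir_deriv f xb h)"
    and "(INF h\<in>sphere 0 1. dir_deriv f xb h) \<noteq> 0"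
  shows "local_error_bound f xb \<and>
         tau_min f xb \<le> 1 / \<bar>INF h\<in>sphere 0 1. dir_deriv f xb h\<bar>"
proof -
  define \<mu> where "\<mu> = (INF h\<in>sphere 0 1. dir_deriv f xb h)"
  obtain h0 where h0: "norm h0 = 1" "dir_deriv f xb h0 = \<mu>" using assms(5) unfolding \<mu>_def by blast
  have "\<mu> \<noteq> 0" using assms(6) unfolding \<mu>_def .
  have fxb: "f xb \<le> 0" using assms(4) by (simp add: sublevel0_def)
  have min: "\<mu> \<le> dir_deriv f xb h" if "norm h = 1" for h
    unfolding \<mu>_def by (rule INF_lower) (use that in simp)
  have "0 \<le> 1 / \<bar>\<mu>\<bar>" "1 / \<bar>\<mu>\<bar> \<noteq> \<infinity>" using \<open>\<mu> \<noteq> 0\<close> by (cases \<mu>; simp)+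
  then have "local_error_bound f xb \<and> tau_min f xb \<le> 1 / \<bar>\<mu>\<bar>"
    using error_bound_of_min_dir_deriv[OF assms(3,1) fxb min h0 \<open>\<mu> \<noteq> 0\<close>]
    by (rule local_error_bound_tau_min_leI)
  then show ?thesis unfolding \<mu>_def .
qed

end
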